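(* All eigenvalues of the linear operator $H(\pi)$ on $\mathbb V$ (equivalently, of the $C\times C$ tridiagonal matrix with diagonal entries $-\nu_i$, subdiagonal entries $(i+1,i)\mapsto\gamma_i$ and superdiagonal entries $(i,i+1)\mapsto i$, where $\gamma_i=\sigma d\,\pi_i^{d-1}$, $\nu_i=\gamma_i+i$) are real and strictly less than $-1$.
   Context: Fix integers $C\ge1$, $d\ge1$ and a real $\sigma>0$. $\mathbb V=\{v\in\mathbb R^{C+1}:v_0=0\}$, identified with $\mathbb R^C$ via coordinates $1,\dots,C$. $\pi\in\mathbb R^{C+1}$ is the unique vector with $1=\pi_0\ge\pi_1\ge\cdots\ge\pi_C\ge0$ satisfying $\sigma(\pi_{n-1}^d-\pi_n^d)=n(\pi_n-\pi_{n+1})$ for $1\le n\le C$, $\pi_{C+1}=0$. $H(\pi)$ is the linear map $(H(\pi)b)_n=\sigma d\,\pi_{n-1}^{d-1}b_{n-1}-(\sigma d\,\pi_n^{d-1}+n)b_n+nb_{n+1}$ for $1\le n\le C$ (with $b_0=b_{C+1}:=0$). *)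

theory Defs
  imports Complex_Main "Jordan_Normal_Form.Char_Poly"
begin

text \<open>Vectors pi are modelled as functions nat => real, pi n being the n-th
coordinate (n = 0..C+1).  The tridiagonal C x C matrix of H(pi) in the
coordinates 1..C of V; Isabelle matrix index r (0-based) corresponds to
coordinate r+1.\<close>

definition gam :: "real \<Rightarrow> nat \<Rightarrow> (nat \<Rightarrow> real) \<Rightarrow> nat \<Rightarrow> real" where
  "gam \<sigma> d \<pi> i = \<sigma> * real d * \<pi> i ^ (d - 1)"

definition nu :: "real \<Rightarrow> nat \<Rightarrow> (nat \<Rightarrow> real) \<Rightarrow> nat \<Rightarrow> real" where
  "nu \<sigma> d \<pi> i = gam \<sigma> d \<pi> i + real i"

definition Hmat :: "nat \<Rightarrow> real \<Rightarrow> nat \<Rightarrow> (nat \<Rightarrow> real) \<Rightarrow> real mat" where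
  "Hmat C \<sigma> d \<pi> = mat C C (\<lambda>(r, c).
      if c = r then - nu \<sigma> d \<pi> (r + 1)
      else if r = c + 1 then gam \<sigma> d \<pi> (c + 1)
      else if c = r + 1 then real (r + 1)
      else 0)"

end

theory Submission
  imports Defs
begin

text \<open>A tridiagonal matrix with positive off-diagonal entries is conjugate, by a positive
diagonal matrix, to a symmetric one; hence its eigenvalues are real, and the same diagonal
weights turn every eigenvector into an eigenvector of the transpose. Written row by row, the
transposed eigenvalue equation of H(pi) is the three-term recurrence
(mu + nu_i) u_i = (i-1) u_(i-1) + gamma_i u_(i+1), in which the coefficients on the right add
up to nu_i - 1 (the last one being dropped at i = C). At an index where |u| is maximal this
forces |mu + nu_i| <= nu_i - 1, so Re mu >= -1 would propagate the maximum of |u| to ever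
larger indices until it reaches the boundary, where the missing term gives a contradiction.\<close>

lemma eigenvector_of_real_mat_components:
  fixes A :: "real mat"
  assumes "A \<in> carrier_mat n n" and "eigenvector (map_mat complex_of_real A) v \<mu>"
  shows "\<exists>i<n. v $ i \<noteq> 0"
    and "\<forall>i<n. (\<Sum>j<n. of_real (A $$ (i, j)) * v $ j) = \<mu> * v $ i"
proof -
  have v: "v \<in> carrier_vec n" "v \<noteq> 0\<^sub>v n" "map_mat complex_of_real A *\<^sub>v v = \<mu> \<cdot>\<^sub>v v"
    using assms by (auto simp: eigenvector_def)
  have dim: "dim_vec v = n" using v(1) by simp
  show "\<exists>i<n. v $ i \<noteq> 0"
    using v(2) dim by (auto intro!: eq_vecI)
  show "\<forall>i<n. (\<Sum>j<n. of_real (A $$ (i, j)) * v $ j) = \<mu> * v $ i"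
  proof (intro allI impI)
    fix i assume "i < n"
    then have "(map_mat complex_of_real A *\<^sub>v v) $ i = (\<Sum>j<n. of_real (A $$ (i, j)) * v $ j)"
      using assms(1) dim by (auto simp: scalar_prod_def atLeast0LessThan intro!: sum.cong)
    then show "(\<Sum>j<n. of_real (A $$ (i, j)) * v $ j) = \<mu> * v $ i"
      using v(3) \<open>i < n\<close> dim by (metis index_smult_vec(1))
  qed
qed

lemma eigenvalue_real_if_symmetrizable:
  fixes A :: "real mat" and p :: "nat \<Rightarrow> real"
  assumes A: "A \<in> carrier_mat n n"
    and p_pos: "\<forall>i<n. 0 < p i"
    and sym: "\<forall>i<n. \<forall>j<n. p i * A $$ (i, j) = p j * A $$ (j, i)"
    and ev: "eigenvector (map_mat complex_of_real A) v \<mu>"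
  shows "\<mu> \<in> \<real>"
proof -
  note v = eigenvector_of_real_mat_components[OF A ev]
  have norm_sq: "complex_of_real ((cmod z)\<^sup>2) = z * cnj z" for z
    by (metis complex_norm_square of_real_power)
  define W where "W = (\<Sum>i<n. p i * (cmod (v $ i))\<^sup>2)"
  define Q where "Q = (\<Sum>i<n. \<Sum>j<n. cnj (v $ i) * of_real (p i * A $$ (i, j)) * v $ j)"
  have "0 < W"
  proof -
    obtain i where i: "i < n" "v $ i \<noteq> 0" using v(1) by blast
    then have "0 < p i * (cmod (v $ i))\<^sup>2" using p_pos by simp
    also have "\<dots> \<le> W" unfolding W_def
      using i p_pos by (intro member_le_sum) (auto intro: less_imp_le)
    finally show ?thesis .
  qed
  have "\<mu> * of_real W = Q"
  proof -
    have "\<mu> * of_real W = (\<Sum>i<n. cnj (v $ i) * of_real (p i) * (\<mu> * v $ i))"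
      unfolding W_def of_real_sum sum_distrib_left
      by (intro sum.cong refl) (simp only: of_real_mult norm_sq; simp add: mult_ac)
    also have "\<dots> = (\<Sum>i<n. cnj (v $ i) * of_real (p i) * (\<Sum>j<n. of_real (A $$ (i, j)) * v $ j))"
      using v(2) by (intro sum.cong refl) simp
    also have "\<dots> = Q"
      unfolding Q_def sum_distrib_left by (intro sum.cong refl) (simp add: mult_ac)
    finally show ?thesis .
  qed
  have "cnj Q = Q"
  proof -
    have "cnj Q = (\<Sum>i<n. \<Sum>j<n. v $ i * of_real (p i * A $$ (i, j)) * cnj (v $ j))"
      unfolding Q_def by simp
    also have "\<dots> = (\<Sum>j<n. \<Sum>i<n. v $ i * of_real (p i * A $$ (i, j)) * cnj (v $ j))"
      by (rule sum.swap)
    also have "\<dots> = Q"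
      unfolding Q_def
    proof (intro sum.cong refl)
      fix i j assume "i \<in> {..<n}" "j \<in> {..<n}"
      then have "p i * A $$ (i, j) = p j * A $$ (j, i)" using sym by simp
      then show "v $ j * of_real (p j * A $$ (j, i)) * cnj (v $ i)
          = cnj (v $ i) * of_real (p i * A $$ (i, j)) * v $ j"
        by (simp only: mult_ac)
    qed
    finally show ?thesis .
  qed
  then have "Q \<in> \<real>" by (simp add: Reals_cnj_iff)
  moreover have "\<mu> = Q / of_real W"
    using \<open>\<mu> * of_real W = Q\<close> \<open>0 < W\<close> by (simp add: field_simps)
  ultimately show ?thesis by simp
qed

lemma symmetrizable_transpose_eigenvector:
  fixes A :: "real mat" and p :: "nat \<Rightarrow> real"
  assumes A: "A \<in> carrier_mat n n"
    and p_pos: "\<forall>i<n. 0 < p i"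
    and sym: "\<forall>i<n. \<forall>j<n. p i * A $$ (i, j) = p j * A $$ (j, i)"
    and ev: "eigenvector (map_mat complex_of_real A) v \<mu>"
  obtains u :: "nat \<Rightarrow> complex"
  where "\<forall>j\<ge>n. u j = 0" and "\<exists>i. u i \<noteq> 0"
    and "\<forall>i<n. (\<Sum>j<n. of_real (A $$ (j, i)) * u j) = \<mu> * u i"
proof
  note v = eigenvector_of_real_mat_components[OF A ev]
  define u where "u j = (if j < n then of_real (p j) * v $ j else 0)" for j
  show "\<forall>j\<ge>n. u j = 0" by (simp add: u_def)
  obtain i where "i < n" "v $ i \<noteq> 0" using v(1) by blast
  then have "u i \<noteq> 0" using p_pos[rule_format, of i] by (simp add: u_def)
  then show "\<exists>i. u i \<noteq> 0" ..
  show "\<forall>i<n. (\<Sum>j<n. of_real (A $$ (j, i)) * u j) = \<mu> * u i"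
  proof (intro allI impI)
    fix i assume "i < n"
    have "(\<Sum>j<n. of_real (A $$ (j, i)) * u j)
        = of_real (p i) * (\<Sum>j<n. of_real (A $$ (i, j)) * v $ j)"
      unfolding sum_distrib_left u_def using sym \<open>i < n\<close>
      by (intro sum.cong refl) (simp flip: of_real_mult add: mult_ac)
    then show "(\<Sum>j<n. of_real (A $$ (j, i)) * u j) = \<mu> * u i"
      using v(2) \<open>i < n\<close> by (simp add: u_def)
  qed
qed

lemma tridiagonal_symmetrizable:
  fixes A :: "real mat"
  assumes band: "\<forall>i<n. \<forall>j<n. j \<noteq> i \<and> j \<noteq> i + 1 \<and> i \<noteq> j + 1 \<longrightarrow> A $$ (i, j) = 0"
    and off_pos: "\<forall>k. k + 1 < n \<longrightarrow> 0 < A $$ (k, k + 1) \<and> 0 < A $$ (k + 1, k)"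
  obtains p where "\<forall>i<n. 0 < p i" and "\<forall>i<n. \<forall>j<n. p i * A $$ (i, j) = p j * A $$ (j, i)"
proof
  define p where "p i = (\<Prod>k<i. A $$ (k, k + 1) / A $$ (k + 1, k))" for i
  show "\<forall>i<n. 0 < p i"
    unfolding p_def using off_pos by (auto intro!: prod_pos divide_pos_pos)
  have step: "p i * A $$ (i, i + 1) = p (i + 1) * A $$ (i + 1, i)" if "i + 1 < n" for i
  proof -
    have "p (i + 1) = p i * (A $$ (i, i + 1) / A $$ (i + 1, i))"
      by (simp add: p_def)
    moreover have "A $$ (i + 1, i) \<noteq> 0"
      using off_pos that by fastforce
    ultimately show ?thesis
      by simp
  qed
  show "\<forall>i<n. \<forall>j<n. p i * A $$ (i, j) = p j * A $$ (j, i)"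
  proof (intro allI impI)
    fix i j assume "i < n" "j < n"
    then consider "j = i" | "j = i + 1" | "i = j + 1" | "j \<noteq> i \<and> j \<noteq> i + 1 \<and> i \<noteq> j + 1"
      by blast
    then show "p i * A $$ (i, j) = p j * A $$ (j, i)"
      by cases (use step band \<open>i < n\<close> \<open>j < n\<close> in auto)
  qed
qed

lemma recurrence_maximum_principle:
  fixes a b :: "nat \<Rightarrow> real" and u :: "nat \<Rightarrow> complex" and \<mu> :: complex
  assumes a_nonneg: "\<forall>i<n. 0 \<le> a i" and b_pos: "\<forall>i<n. 0 < b i"
    and u_vanish: "\<forall>j\<ge>n. u j = 0" and u_nz: "\<exists>i. u i \<noteq> 0"
    and rec: "\<forall>i<n. (\<mu> + of_real (a i + b i + 1)) * u i
                      = of_real (a i) * u (i - 1) + of_real (b i) * u (i + 1)"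
  shows "Re \<mu> < -1"
proof (rule ccontr)
  assume "\<not> Re \<mu> < -1"
  define m where "m = Max ((\<lambda>j. cmod (u j)) ` {..<n})"
  obtain i0 where i0: "i0 < n" "u i0 \<noteq> 0" using u_nz u_vanish by (meson not_le)
  have bounded_lt: "cmod (u j) \<le> m" if "j < n" for j
    using that by (simp add: m_def)
  then have "0 < m" using i0 by (meson zero_less_norm_iff less_le_trans)
  then have bounded: "cmod (u j) \<le> m" for j
    using bounded_lt u_vanish by (cases "j < n") auto
  define I where "I = {i. cmod (u i) = m}"
  have I_below: "I \<subseteq> {..<n}"
    using \<open>0 < m\<close> u_vanish by (auto simp: I_def) (meson norm_zero not_le order_less_irrefl)
  have "m \<in> (\<lambda>j. cmod (u j)) ` {..<n}"
    unfolding m_def using i0 by (intro Max_in) auto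
  then have "I \<noteq> {}" by (auto simp: I_def)
  define i where "i = Max I"
  have fin: "finite I" using I_below finite_subset by blast
  have i: "i < n" "cmod (u i) = m"
    using Max_in[OF fin \<open>I \<noteq> {}\<close>] I_below by (auto simp: i_def I_def)
  \<comment> \<open>i is the last index where |u| is maximal, yet Re mu >= -1 forces the maximum at i + 1.\<close>
  have "a i + b i \<le> cmod (\<mu> + of_real (a i + b i + 1))"
    using complex_Re_le_cmod[of "\<mu> + of_real (a i + b i + 1)"] \<open>\<not> Re \<mu> < -1\<close> by simp
  then have "(a i + b i) * m \<le> cmod ((\<mu> + of_real (a i + b i + 1)) * u i)"
    using \<open>0 < m\<close> i(2) by (simp add: norm_mult)
  also have "\<dots> = cmod (of_real (a i) * u (i - 1) + of_real (b i) * u (i + 1))"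
    using rec i(1) by simp
  also have "\<dots> \<le> cmod (of_real (a i) * u (i - 1)) + cmod (of_real (b i) * u (i + 1))"
    by (rule norm_triangle_ineq)
  also have "\<dots> \<le> a i * m + b i * cmod (u (i + 1))"
    using a_nonneg b_pos i(1) bounded[of "i - 1"]
    by (auto simp: norm_mult intro!: add_mono mult_left_mono)
  finally have "b i * m \<le> b i * cmod (u (i + 1))"
    by (simp add: algebra_simps)
  then have "m \<le> cmod (u (i + 1))"
    using b_pos i(1) by simp
  then have "i + 1 \<in> I"
    using bounded by (simp add: I_def eq_iff)
  then show False
    using Max_ge[OF fin] by (fastforce simp: i_def)
qed

lemma nonneg_if_antimono_upto:
  fixes \<pi> :: "nat \<Rightarrow> real"
  assumes antimono: "\<forall>n\<in>{1..C}. \<pi> n \<le> \<pi> (n - 1)" and "0 \<le> \<pi> C"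
  shows "\<forall>n\<le>C. 0 \<le> \<pi> n"
proof (intro allI impI)
  fix n assume "n \<le> C"
  then have "\<pi> C \<le> \<pi> n"
  proof (induction n rule: inc_induct)
    case (step n)
    then show ?case using antimono[rule_format, of "Suc n"] by simp
  qed simp
  then show "0 \<le> \<pi> n" using \<open>0 \<le> \<pi> C\<close> by simp
qed

text \<open>If pi (n + 1) vanished, the balance equation at n + 1 would equate the positive number
sigma pi n ^ d with -(n + 1) pi (n + 2) <= 0.\<close>

lemma balance_solution_pos:
  fixes \<pi> :: "nat \<Rightarrow> real"
  assumes "0 < \<sigma>" and "1 \<le> d" and "0 < \<pi> 0"
    and nonneg: "\<forall>n\<le>C + 1. 0 \<le> \<pi> n"
    and balance: "\<forall>n\<in>{1..C}. \<sigma> * (\<pi> (n - 1) ^ d - \<pi> n ^ d) = real n * (\<pi> n - \<pi> (n + 1))"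
  shows "\<forall>n\<le>C. 0 < \<pi> n"
proof (intro allI impI)
  fix n show "n \<le> C \<Longrightarrow> 0 < \<pi> n"
  proof (induction n)
    case (Suc n)
    show ?case
    proof (rule ccontr)
      assume "\<not> 0 < \<pi> (Suc n)"
      moreover have "0 \<le> \<pi> (Suc n)" using nonneg Suc.prems by simp
      ultimately have "\<pi> (Suc n) = 0" by simp
      then have "\<sigma> * \<pi> n ^ d = - (real (Suc n) * \<pi> (Suc n + 1))"
        using balance[rule_format, of "Suc n"] Suc.prems \<open>1 \<le> d\<close> by (simp add: power_0_left)
      moreover have "0 < \<sigma> * \<pi> n ^ d" and "0 \<le> \<pi> (Suc n + 1)"
        using Suc \<open>0 < \<sigma>\<close> nonneg by auto
      ultimately show False
        by (smt (verit) mult_nonneg_nonneg of_nat_0_le_iff)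
    qed
  qed (use \<open>0 < \<pi> 0\<close> in simp)
qed

lemma Hmat_carrier: "Hmat C \<sigma> d \<pi> \<in> carrier_mat C C"
  by (simp add: Hmat_def)

lemma Hmat_tridiagonal:
  "\<forall>i<C. \<forall>j<C. j \<noteq> i \<and> j \<noteq> i + 1 \<and> i \<noteq> j + 1 \<longrightarrow> Hmat C \<sigma> d \<pi> $$ (i, j) = 0"
  by (simp add: Hmat_def)

lemma Hmat_off_diagonal_pos:
  assumes "0 < \<sigma>" and "1 \<le> d" and "\<forall>n\<le>C. 0 < \<pi> n"
  shows "\<forall>k. k + 1 < C \<longrightarrow> 0 < Hmat C \<sigma> d \<pi> $$ (k, k + 1) \<and> 0 < Hmat C \<sigma> d \<pi> $$ (k + 1, k)"
  using assms by (simp add: Hmat_def gam_def)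

lemma Hmat_transpose_eigen_recurrence:
  fixes u :: "nat \<Rightarrow> complex"
  assumes "i < C" and u_vanish: "\<forall>j\<ge>C. u j = 0"
    and eig: "(\<Sum>j<C. of_real (Hmat C \<sigma> d \<pi> $$ (j, i)) * u j) = \<mu> * u i"
  shows "(\<mu> + of_real (real i + gam \<sigma> d \<pi> (i + 1) + 1)) * u i
           = of_real (real i) * u (i - 1) + of_real (gam \<sigma> d \<pi> (i + 1)) * u (i + 1)"
proof -
  have "(\<Sum>j<C. of_real (Hmat C \<sigma> d \<pi> $$ (j, i)) * u j)
      = (\<Sum>j<C. (if j = i then - of_real (nu \<sigma> d \<pi> (i + 1)) * u i else 0)
          + (if j = i + 1 then of_real (gam \<sigma> d \<pi> (i + 1)) * u (i + 1) else 0)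
          + (if j + 1 = i then of_real (real i) * u (i - 1) else 0))"
    using \<open>i < C\<close> by (intro sum.cong refl) (auto simp: Hmat_def)
  also have "\<dots> = - of_real (nu \<sigma> d \<pi> (i + 1)) * u i
        + of_real (gam \<sigma> d \<pi> (i + 1)) * u (i + 1) + of_real (real i) * u (i - 1)"
    using \<open>i < C\<close> u_vanish by (cases i) (auto simp: sum.distrib)
  finally have "\<mu> * u i = - of_real (nu \<sigma> d \<pi> (i + 1)) * u i
        + of_real (gam \<sigma> d \<pi> (i + 1)) * u (i + 1) + of_real (real i) * u (i - 1)"
    using eig by simp
  then show ?thesis
    by (simp add: nu_def algebra_simps)
qed

theorem mainTheorem8:
  fixes C d :: nat and \<sigma> :: real and \<pi> :: "nat \<Rightarrow> real"
  assumes "C \<ge> 1" and "d \<ge> 1" and "\<sigma> > 0"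
    and "\<pi> 0 = 1"
    and "\<forall>n\<in>{1..C}. \<pi> n \<le> \<pi> (n - 1)"
    and "\<pi> C \<ge> 0"
    and "\<pi> (C + 1) = 0"
    and "\<forall>n\<in>{1..C}. \<sigma> * (\<pi> (n - 1) ^ d - \<pi> n ^ d) = real n * (\<pi> n - \<pi> (n + 1))"
  shows "\<forall>\<mu>::complex. eigenvalue (map_mat complex_of_real (Hmat C \<sigma> d \<pi>)) \<mu>
           \<longrightarrow> \<mu> \<in> \<real> \<and> Re \<mu> < -1"
proof (intro allI impI)
  fix \<mu> :: complex
  assume "eigenvalue (map_mat complex_of_real (Hmat C \<sigma> d \<pi>)) \<mu>"
  then obtain v where v: "eigenvector (map_mat complex_of_real (Hmat C \<sigma> d \<pi>)) v \<mu>"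
    by (auto simp: eigenvalue_def)
  have "\<forall>n\<le>C + 1. 0 \<le> \<pi> n"
    using nonneg_if_antimono_upto[OF assms(5,6)] assms(7) by (simp add: le_Suc_eq)
  then have \<pi>_pos: "\<forall>n\<le>C. 0 < \<pi> n"
    using balance_solution_pos assms(2,3,4,8) by simp
  obtain p where p_pos: "\<forall>i<C. 0 < p i"
    and sym: "\<forall>i<C. \<forall>j<C. p i * Hmat C \<sigma> d \<pi> $$ (i, j) = p j * Hmat C \<sigma> d \<pi> $$ (j, i)"
    using tridiagonal_symmetrizable[OF Hmat_tridiagonal Hmat_off_diagonal_pos[OF assms(3,2) \<pi>_pos]] .
  obtain u where u_vanish: "\<forall>j\<ge>C. u j = 0" and u_nz: "\<exists>i. u i \<noteq> 0"
    and u_eig: "\<forall>i<C. (\<Sum>j<C. of_real (Hmat C \<sigma> d \<pi> $$ (j, i)) * u j) = \<mu> * u i"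
    using symmetrizable_transpose_eigenvector[OF Hmat_carrier p_pos sym v] .
  have "\<forall>i<C. (\<mu> + of_real (real i + gam \<sigma> d \<pi> (i + 1) + 1)) * u i
      = of_real (real i) * u (i - 1) + of_real (gam \<sigma> d \<pi> (i + 1)) * u (i + 1)"
    using Hmat_transpose_eigen_recurrence u_vanish u_eig by blast
  moreover have "\<forall>i<C. 0 < gam \<sigma> d \<pi> (i + 1)"
    using \<pi>_pos assms(2,3) by (simp add: gam_def)
  ultimately have "Re \<mu> < -1"
    using u_vanish u_nz by (intro recurrence_maximum_principle[of C "\<lambda>i. real i"]) auto
  moreover have "\<mu> \<in> \<real>"
    using eigenvalue_real_if_symmetrizable[OF Hmat_carrier p_pos sym v] .
  ultimately show "\<mu> \<in> \<real> \<and> Re \<mu> < -1" by simp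
qed

end
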